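(* Suppose $\rho^w$ and $\rho^b$ are convex risk measures. Then an equal risk price without commitment exists if and only if the fair price interval $[-\varrho^b_\tau(0),\ \varrho^w_\tau(0)]$ is bounded. Moreover, when it exists it equals the center of this interval, $p_0^*=(\varrho^w_\tau(0)-\varrho^b_\tau(0))/2$.
   Context: Discrete-time setting: filtered probability space $(\Omega,\mathcal{F},(\mathcal{F}_t),\mathbb{P})$, zero interest rate, risky asset with $S_k:=S_{t_k}$ at trading dates $t_0<\dots<t_{K-1}<t_K=T$, $\Delta S_{k+1}=S_{k+1}-S_k$, adapted auxiliary process $Y_k$. Exercise times are stopping times $\tau:\Omega\to\{0,\dots,K\}$ with payoff $F(S_\tau,Y_\tau)=\sum_k\mathbf{1}\{\tau=k\}F_k(S_k,Y_k)$. $\bar{\mathcal{X}}_\tau(p_0)$: wealth processes with $X^\tau_0=p_0$, $X^\tau_{k+1}(\tau)=X^\tau_k(\tau)+(\xi_k\mathbf{1}\{\tau>k\}+\sum_{i=0}^k\hat\xi^i_k\mathbf{1}\{\tau=i\})\Delta S_{k+1}$ for every $\tau$, with $\xi_k,\hat\xi^i_k$ $\mathcal{F}_{t_k}$-measurable. A convex risk measure is monotone, translation invariant, normalized and convex. Define $\varrho^w_\tau(p_0)=\inf_{X^\tau\in\bar{\mathcal{X}}_\tau(p_0)}\sup_\tau\rho^w(F(S_\tau,Y_\tau)-X^\tau_K(\tau))$ and $\varrho^b_\tau(p_0)=\inf_{X^\tau\in\bar{\mathcal{X}}_\tau(-p_0)}\inf_\tau\rho^b(-F(S_\tau,Y_\tau)-X^\tau_K(\tau))$.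 The equal risk price without commitment is the unique $p_0^*$ with $\varrho^w_\tau(p_0^* )=\varrho^b_\tau(p_0^* )\in\mathbb{R}$. *)

theory Defs
  imports "HOL-Probability.Probability"
begin

definition discrete_filtration :: "'a measure \<Rightarrow> (nat \<Rightarrow> 'a measure) \<Rightarrow> nat \<Rightarrow> bool" where
  "discrete_filtration M Fl K \<longleftrightarrow>
     (\<forall>k\<le>K. space (Fl k) = space M) \<and>
     (\<forall>k<K. sets (Fl k) \<subseteq> sets (Fl (Suc k))) \<and>
     sets (Fl K) \<subseteq> sets M"

definition exercise_times :: "'a measure \<Rightarrow> (nat \<Rightarrow> 'a measure) \<Rightarrow> nat \<Rightarrow> ('a \<Rightarrow> nat) set" where
  "exercise_times M Fl K =
     {\<tau>. (\<forall>\<omega>\<in>space M. \<tau> \<omega> \<le> K) \<and> (\<forall>k\<le>K. {\<omega>\<in>space M. \<tau> \<omega> = k} \<in> sets (Fl k))}"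

definition payoff ::
  "(nat \<Rightarrow> real \<Rightarrow> 'y \<Rightarrow> real) \<Rightarrow> (nat \<Rightarrow> 'a \<Rightarrow> real) \<Rightarrow> (nat \<Rightarrow> 'a \<Rightarrow> 'y) \<Rightarrow> ('a \<Rightarrow> nat) \<Rightarrow> 'a \<Rightarrow> real" where
  "payoff F S Y \<tau> \<omega> = F (\<tau> \<omega>) (S (\<tau> \<omega>) \<omega>) (Y (\<tau> \<omega>) \<omega>)"

definition strategies ::
  "(nat \<Rightarrow> 'a measure) \<Rightarrow> nat \<Rightarrow> ((nat \<Rightarrow> 'a \<Rightarrow> real) \<times> (nat \<Rightarrow> nat \<Rightarrow> 'a \<Rightarrow> real)) set" where
  "strategies Fl K =
     {(\<xi>, \<xi>h). (\<forall>k<K. \<xi> k \<in> borel_measurable (Fl k)) \<and>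
               (\<forall>k<K. \<forall>i\<le>k. \<xi>h i k \<in> borel_measurable (Fl k))}"

text \<open>Terminal wealth X^tau_K(tau) of the strategy started from initial wealth p0:
  X_{k+1} = X_k + (xi_k 1{tau>k} + sum_{i\<le>k} xihat^i_k 1{tau=i}) Delta S_{k+1}.\<close>
definition terminal_wealth ::
  "(nat \<Rightarrow> 'a \<Rightarrow> real) \<Rightarrow> nat \<Rightarrow> real \<Rightarrow> (nat \<Rightarrow> 'a \<Rightarrow> real) \<Rightarrow> (nat \<Rightarrow> nat \<Rightarrow> 'a \<Rightarrow> real)
     \<Rightarrow> ('a \<Rightarrow> nat) \<Rightarrow> 'a \<Rightarrow> real" where
  "terminal_wealth S K p0 \<xi> \<xi>h \<tau> \<omega> =
     p0 + (\<Sum>k<K. (\<xi> k \<omega> * (if \<tau> \<omega> > k then 1 else 0)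
                   + (\<Sum>i\<le>k. \<xi>h i k \<omega> * (if \<tau> \<omega> = i then 1 else 0)))
                  * (S (Suc k) \<omega> - S k \<omega>))"

definition wealth_processes ::
  "(nat \<Rightarrow> 'a measure) \<Rightarrow> (nat \<Rightarrow> 'a \<Rightarrow> real) \<Rightarrow> nat \<Rightarrow> real \<Rightarrow> (('a \<Rightarrow> nat) \<Rightarrow> 'a \<Rightarrow> real) set" where
  "wealth_processes Fl S K p0 =
     (\<lambda>(\<xi>, \<xi>h). terminal_wealth S K p0 \<xi> \<xi>h) ` strategies Fl K"

text \<open>Convention: risk measures act on losses (random variables on M): monotone increasing,
  rho(X + m) = rho(X) + m, rho(0) = 0, convex.\<close>
definition convex_risk_measure :: "'a measure \<Rightarrow> (('a \<Rightarrow> real) \<Rightarrow> real) \<Rightarrow> bool" where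
  "convex_risk_measure M \<rho> \<longleftrightarrow>
     (\<forall>X Y. X \<in> borel_measurable M \<longrightarrow> Y \<in> borel_measurable M \<longrightarrow>
            (\<forall>\<omega>\<in>space M. X \<omega> \<le> Y \<omega>) \<longrightarrow> \<rho> X \<le> \<rho> Y) \<and>
     (\<forall>X (m::real). X \<in> borel_measurable M \<longrightarrow> \<rho> (\<lambda>\<omega>. X \<omega> + m) = \<rho> X + m) \<and>
     \<rho> (\<lambda>\<omega>. 0) = 0 \<and>
     (\<forall>X Y (l::real). X \<in> borel_measurable M \<longrightarrow> Y \<in> borel_measurable M \<longrightarrow> 0 \<le> l \<longrightarrow> l \<le> 1 \<longrightarrow>
            \<rho> (\<lambda>\<omega>. l * X \<omega> + (1 - l) * Y \<omega>) \<le> l * \<rho> X + (1 - l) * \<rho> Y)"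

definition writer_risk ::
  "'a measure \<Rightarrow> (nat \<Rightarrow> 'a measure) \<Rightarrow> nat \<Rightarrow> (nat \<Rightarrow> 'a \<Rightarrow> real) \<Rightarrow> (nat \<Rightarrow> 'a \<Rightarrow> 'y)
     \<Rightarrow> (nat \<Rightarrow> real \<Rightarrow> 'y \<Rightarrow> real) \<Rightarrow> (('a \<Rightarrow> real) \<Rightarrow> real) \<Rightarrow> real \<Rightarrow> ereal" where
  "writer_risk M Fl K S Y F \<rho>w p0 =
     (INF X\<in>wealth_processes Fl S K p0. SUP \<tau>\<in>exercise_times M Fl K.
        ereal (\<rho>w (\<lambda>\<omega>. payoff F S Y \<tau> \<omega> - X \<tau> \<omega>)))"

definition buyer_risk ::
  "'a measure \<Rightarrow> (nat \<Rightarrow> 'a measure) \<Rightarrow> nat \<Rightarrow> (nat \<Rightarrow> 'a \<Rightarrow> real) \<Rightarrow> (nat \<Rightarrow> 'a \<Rightarrow> 'y)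
     \<Rightarrow> (nat \<Rightarrow> real \<Rightarrow> 'y \<Rightarrow> real) \<Rightarrow> (('a \<Rightarrow> real) \<Rightarrow> real) \<Rightarrow> real \<Rightarrow> ereal" where
  "buyer_risk M Fl K S Y F \<rho>b p0 =
     (INF X\<in>wealth_processes Fl S K (- p0). INF \<tau>\<in>exercise_times M Fl K.
        ereal (\<rho>b (\<lambda>\<omega>. - payoff F S Y \<tau> \<omega> - X \<tau> \<omega>)))"

definition equal_risk_price ::
  "'a measure \<Rightarrow> (nat \<Rightarrow> 'a measure) \<Rightarrow> nat \<Rightarrow> (nat \<Rightarrow> 'a \<Rightarrow> real) \<Rightarrow> (nat \<Rightarrow> 'a \<Rightarrow> 'y)
     \<Rightarrow> (nat \<Rightarrow> real \<Rightarrow> 'y \<Rightarrow> real) \<Rightarrow> (('a \<Rightarrow> real) \<Rightarrow> real) \<Rightarrow> (('a \<Rightarrow> real) \<Rightarrow> real)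
     \<Rightarrow> real \<Rightarrow> bool" where
  "equal_risk_price M Fl K S Y F \<rho>w \<rho>b p0 \<longleftrightarrow>
     writer_risk M Fl K S Y F \<rho>w p0 = buyer_risk M Fl K S Y F \<rho>b p0 \<and>
     \<bar>writer_risk M Fl K S Y F \<rho>w p0\<bar> \<noteq> \<infinity>"

end

theory Submission
  imports Defs
begin

text \<open>Cash additivity moves the initial capital out of both risks: the writer's risk at
  price \<open>p\<close> is \<open>\<varrho>\<^sup>w(0) - p\<close> and the buyer's is \<open>\<varrho>\<^sup>b(0) + p\<close>. The equal risk condition
  \<open>\<varrho>\<^sup>w(0) - p = \<varrho>\<^sup>b(0) + p\<close> therefore has a finite solution exactly when \<open>\<varrho>\<^sup>w(0)\<close> and
  \<open>\<varrho>\<^sup>b(0)\<close> are both finite, and the solution is then the midpoint \<open>(\<varrho>\<^sup>w(0) - \<varrho>\<^sup>b(0)) / 2\<close>.\<close>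

lemma Ex1_conj_eq_iff: "(\<exists>!x. P \<and> x = t) \<longleftrightarrow> P"
  by blast

lemma ereal_add_real_cancel: "x + ereal c + ereal (- c) = x"
  by (cases x) auto

lemma SUP_ereal_add_real: "(SUP i\<in>I. f i + ereal c) = (SUP i\<in>I. f i) + ereal c"
proof (rule antisym)
  show "(SUP i\<in>I. f i + ereal c) \<le> (SUP i\<in>I. f i) + ereal c"
    by (intro SUP_least add_right_mono SUP_upper)
  have "(SUP i\<in>I. f i) = (SUP i\<in>I. f i + ereal c + ereal (- c))"
    by (simp add: ereal_add_real_cancel)
  also have "\<dots> \<le> (SUP i\<in>I. f i + ereal c) + ereal (- c)"
    by (intro SUP_least add_right_mono SUP_upper)
  finally show "(SUP i\<in>I. f i) + ereal c \<le> (SUP i\<in>I. f i + ereal c)"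
    using add_right_mono[of _ _ "ereal c"] ereal_add_real_cancel[of _ "- c"] by fastforce
qed

lemma INF_ereal_add_real: "(INF i\<in>I. f i + ereal c) = (INF i\<in>I. f i) + ereal c"
proof (rule antisym)
  show "(INF i\<in>I. f i) + ereal c \<le> (INF i\<in>I. f i + ereal c)"
    by (intro INF_greatest add_right_mono INF_lower)
  have "(INF i\<in>I. f i + ereal c) + ereal (- c) \<le> (INF i\<in>I. f i + ereal c + ereal (- c))"
    by (intro INF_greatest add_right_mono INF_lower)
  also have "\<dots> = (INF i\<in>I. f i)"
    by (simp add: ereal_add_real_cancel)
  finally show "(INF i\<in>I. f i + ereal c) \<le> (INF i\<in>I. f i) + ereal c"
    using add_right_mono[of _ _ "ereal c"] ereal_add_real_cancel[of _ "- c"] by fastforce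
qed

lemma ereal_diff_real_eq_add_real_iff:
  fixes w b :: ereal
  shows "(w - ereal p = b + ereal p \<and> \<bar>w - ereal p\<bar> \<noteq> \<infinity>) \<longleftrightarrow>
    (\<bar>b\<bar> \<noteq> \<infinity> \<and> \<bar>w\<bar> \<noteq> \<infinity>) \<and> p = (real_of_ereal w - real_of_ereal b) / 2"
  by (cases w; cases b) auto

definition cash_additive :: "'a measure \<Rightarrow> (('a \<Rightarrow> real) \<Rightarrow> real) \<Rightarrow> bool" where
  "cash_additive M \<rho> \<longleftrightarrow>
     (\<forall>X (m::real). X \<in> borel_measurable M \<longrightarrow> \<rho> (\<lambda>\<omega>. X \<omega> + m) = \<rho> X + m)"

lemma convex_risk_measure_cash_additive: "convex_risk_measure M \<rho> \<Longrightarrow> cash_additive M \<rho>"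
  unfolding convex_risk_measure_def cash_additive_def by blast

lemma discrete_filtration_subalgebra:
  assumes filt: "discrete_filtration M Fl K" and "k \<le> K"
  shows "subalgebra M (Fl k)"
proof -
  have "sets (Fl k) \<subseteq> sets (Fl K)"
    using \<open>k \<le> K\<close>
  proof (induction rule: dec_induct)
    case step
    then show ?case using filt unfolding discrete_filtration_def by blast
  qed simp
  then show ?thesis
    using filt \<open>k \<le> K\<close> unfolding discrete_filtration_def subalgebra_def by auto
qed

lemma discrete_filtration_measurable:
  "discrete_filtration M Fl K \<Longrightarrow> k \<le> K \<Longrightarrow> f \<in> borel_measurable (Fl k) \<Longrightarrow> f \<in> borel_measurable M"
  by (rule measurable_from_subalg[OF discrete_filtration_subalgebra])

lemma exercise_time_measurable:
  assumes filt: "discrete_filtration M Fl K" and \<tau>: "\<tau> \<in> exercise_times M Fl K"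
  shows "\<tau> \<in> M \<rightarrow>\<^sub>M count_space {..K}"
  unfolding measurable_count_space_eq2_countable
proof (intro conjI ballI)
  show "\<tau> \<in> space M \<rightarrow> {..K}"
    using \<tau> unfolding exercise_times_def by auto
next
  fix k assume "k \<in> {..K}"
  then have "{\<omega>\<in>space M. \<tau> \<omega> = k} \<in> sets (Fl k)" and "subalgebra M (Fl k)"
    using \<tau> discrete_filtration_subalgebra[OF filt] unfolding exercise_times_def by auto
  moreover have "\<tau> -` {k} \<inter> space M = {\<omega>\<in>space M. \<tau> \<omega> = k}"
    by auto
  ultimately show "\<tau> -` {k} \<inter> space M \<in> sets M"
    unfolding subalgebra_def by auto
qed

lemma payoff_measurable:
  assumes filt: "discrete_filtration M Fl K"
    and F: "\<forall>k\<le>K. (\<lambda>\<omega>. F k (S k \<omega>) (Y k \<omega>)) \<in> borel_measurable (Fl k)"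
    and \<tau>: "\<tau> \<in> exercise_times M Fl K"
  shows "payoff F S Y \<tau> \<in> borel_measurable M"
  unfolding payoff_def
  by (rule measurable_compose_countable'[where f="\<lambda>k \<omega>. F k (S k \<omega>) (Y k \<omega>)",
        OF _ exercise_time_measurable[OF filt \<tau>]])
     (use F discrete_filtration_measurable[OF filt] in auto)

lemma terminal_wealth_measurable:
  assumes filt: "discrete_filtration M Fl K"
    and S: "\<forall>k\<le>K. S k \<in> borel_measurable (Fl k)"
    and \<tau>: "\<tau> \<in> exercise_times M Fl K"
    and strategy: "(\<xi>, \<xi>h) \<in> strategies Fl K"
  shows "terminal_wealth S K p \<xi> \<xi>h \<tau> \<in> borel_measurable M"
proof -
  have "\<xi> k \<in> borel_measurable M" if "k < K" for k
    using strategy that discrete_filtration_measurable[OF filt, of k]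
    unfolding strategies_def by auto
  moreover have "\<xi>h i k \<in> borel_measurable M" if "k < K" "i \<le> k" for i k
    using strategy that discrete_filtration_measurable[OF filt, of k]
    unfolding strategies_def by auto
  moreover have "S k \<in> borel_measurable M" if "k \<le> K" for k
    using S that discrete_filtration_measurable[OF filt] by auto
  ultimately show ?thesis
    unfolding terminal_wealth_def
    by (intro borel_measurable_add borel_measurable_const borel_measurable_sum
        borel_measurable_times borel_measurable_diff measurable_count_space
        measurable_compose[OF exercise_time_measurable[OF filt \<tau>]]) auto
qed

lemma terminal_wealth_translate:
  "terminal_wealth S K p \<xi> \<xi>h \<tau> \<omega> = p + terminal_wealth S K 0 \<xi> \<xi>h \<tau> \<omega>"
  by (simp add: terminal_wealth_def)

lemma cash_additive_translate_wealth:
  assumes \<rho>: "cash_additive M \<rho>" and Z: "Z \<in> borel_measurable M"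
    and filt: "discrete_filtration M Fl K"
    and S: "\<forall>k\<le>K. S k \<in> borel_measurable (Fl k)"
    and \<tau>: "\<tau> \<in> exercise_times M Fl K"
    and strategy: "(\<xi>, \<xi>h) \<in> strategies Fl K"
  shows "\<rho> (\<lambda>\<omega>. Z \<omega> - terminal_wealth S K p \<xi> \<xi>h \<tau> \<omega>)
       = \<rho> (\<lambda>\<omega>. Z \<omega> - terminal_wealth S K 0 \<xi> \<xi>h \<tau> \<omega>) - p"
proof -
  have "(\<lambda>\<omega>. Z \<omega> - terminal_wealth S K 0 \<xi> \<xi>h \<tau> \<omega>) \<in> borel_measurable M"
    using Z terminal_wealth_measurable[OF filt S \<tau> strategy] by (rule borel_measurable_diff)
  then have "\<rho> (\<lambda>\<omega>. (Z \<omega> - terminal_wealth S K 0 \<xi> \<xi>h \<tau> \<omega>) + (- p))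
      = \<rho> (\<lambda>\<omega>. Z \<omega> - terminal_wealth S K 0 \<xi> \<xi>h \<tau> \<omega>) + (- p)"
    using \<rho> unfolding cash_additive_def by blast
  then show ?thesis
    by (simp add: terminal_wealth_translate[of S K p] algebra_simps)
qed

lemma writer_risk_translate:
  assumes filt: "discrete_filtration M Fl K"
    and S: "\<forall>k\<le>K. S k \<in> borel_measurable (Fl k)"
    and F: "\<forall>k\<le>K. (\<lambda>\<omega>. F k (S k \<omega>) (Y k \<omega>)) \<in> borel_measurable (Fl k)"
    and \<rho>: "cash_additive M \<rho>"
  shows "writer_risk M Fl K S Y F \<rho> p = writer_risk M Fl K S Y F \<rho> 0 - ereal p"
proof -
  have "writer_risk M Fl K S Y F \<rho> p =
      (INF s\<in>strategies Fl K. SUP \<tau>\<in>exercise_times M Fl K.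
         ereal (\<rho> (\<lambda>\<omega>. payoff F S Y \<tau> \<omega> - (case s of (\<xi>, \<xi>h) \<Rightarrow> terminal_wealth S K 0 \<xi> \<xi>h) \<tau> \<omega>))
         + ereal (- p))"
    unfolding writer_risk_def wealth_processes_def image_image
  proof (intro INF_cong SUP_cong refl)
    fix s \<tau> assume s: "s \<in> strategies Fl K" and \<tau>: "\<tau> \<in> exercise_times M Fl K"
    obtain \<xi> \<xi>h where s_eq: "s = (\<xi>, \<xi>h)"
      by (cases s)
    \<comment> \<open>Unification cannot recover \<open>F\<close> and \<open>Y\<close> from the payoff hypothesis, and \<open>p\<close> must be
      instantiated: at \<open>p = 0\<close> the rule would rewrite its own right-hand side forever.\<close>
    note payoff = payoff_measurable[where F=F and S=S and Y=Y, OF filt F \<tau>]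
    show "ereal (\<rho> (\<lambda>\<omega>. payoff F S Y \<tau> \<omega> - (case s of (\<xi>, \<xi>h) \<Rightarrow> terminal_wealth S K p \<xi> \<xi>h) \<tau> \<omega>))
      = ereal (\<rho> (\<lambda>\<omega>. payoff F S Y \<tau> \<omega> - (case s of (\<xi>, \<xi>h) \<Rightarrow> terminal_wealth S K 0 \<xi> \<xi>h) \<tau> \<omega>))
        + ereal (- p)"
      using cash_additive_translate_wealth[OF \<rho> payoff filt S \<tau> s[unfolded s_eq], where p=p]
      unfolding s_eq by simp
  qed
  also have "\<dots> = writer_risk M Fl K S Y F \<rho> 0 + ereal (- p)"
    unfolding SUP_ereal_add_real INF_ereal_add_real writer_risk_def wealth_processes_def image_image ..
  finally show ?thesis
    by (simp add: minus_ereal_def)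
qed

lemma buyer_risk_translate:
  assumes filt: "discrete_filtration M Fl K"
    and S: "\<forall>k\<le>K. S k \<in> borel_measurable (Fl k)"
    and F: "\<forall>k\<le>K. (\<lambda>\<omega>. F k (S k \<omega>) (Y k \<omega>)) \<in> borel_measurable (Fl k)"
    and \<rho>: "cash_additive M \<rho>"
  shows "buyer_risk M Fl K S Y F \<rho> p = buyer_risk M Fl K S Y F \<rho> 0 + ereal p"
proof -
  have "buyer_risk M Fl K S Y F \<rho> p =
      (INF s\<in>strategies Fl K. INF \<tau>\<in>exercise_times M Fl K.
         ereal (\<rho> (\<lambda>\<omega>. - payoff F S Y \<tau> \<omega> - (case s of (\<xi>, \<xi>h) \<Rightarrow> terminal_wealth S K 0 \<xi> \<xi>h) \<tau> \<omega>))
         + ereal p)"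
    unfolding buyer_risk_def wealth_processes_def image_image
  proof (intro INF_cong refl)
    fix s \<tau> assume s: "s \<in> strategies Fl K" and \<tau>: "\<tau> \<in> exercise_times M Fl K"
    obtain \<xi> \<xi>h where s_eq: "s = (\<xi>, \<xi>h)"
      by (cases s)
    note payoff = payoff_measurable[where F=F and S=S and Y=Y, OF filt F \<tau>]
    show "ereal (\<rho> (\<lambda>\<omega>. - payoff F S Y \<tau> \<omega> - (case s of (\<xi>, \<xi>h) \<Rightarrow> terminal_wealth S K (- p) \<xi> \<xi>h) \<tau> \<omega>))
      = ereal (\<rho> (\<lambda>\<omega>. - payoff F S Y \<tau> \<omega> - (case s of (\<xi>, \<xi>h) \<Rightarrow> terminal_wealth S K 0 \<xi> \<xi>h) \<tau> \<omega>))
        + ereal p"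
      using cash_additive_translate_wealth[OF \<rho> borel_measurable_uminus[OF payoff] filt S \<tau>
          s[unfolded s_eq], where p="- p"]
      unfolding s_eq by simp
  qed
  also have "\<dots> = buyer_risk M Fl K S Y F \<rho> 0 + ereal p"
    unfolding INF_ereal_add_real buyer_risk_def wealth_processes_def image_image minus_zero ..
  finally show ?thesis .
qed

lemma equal_risk_price_iff:
  assumes filt: "discrete_filtration M Fl K"
    and S: "\<forall>k\<le>K. S k \<in> borel_measurable (Fl k)"
    and F: "\<forall>k\<le>K. (\<lambda>\<omega>. F k (S k \<omega>) (Y k \<omega>)) \<in> borel_measurable (Fl k)"
    and \<rho>w: "cash_additive M \<rho>w" and \<rho>b: "cash_additive M \<rho>b"
  shows "equal_risk_price M Fl K S Y F \<rho>w \<rho>b p \<longleftrightarrow>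
    (\<bar>buyer_risk M Fl K S Y F \<rho>b 0\<bar> \<noteq> \<infinity> \<and> \<bar>writer_risk M Fl K S Y F \<rho>w 0\<bar> \<noteq> \<infinity>) \<and>
    p = (real_of_ereal (writer_risk M Fl K S Y F \<rho>w 0)
         - real_of_ereal (buyer_risk M Fl K S Y F \<rho>b 0)) / 2"
  unfolding equal_risk_price_def writer_risk_translate[where F=F and Y=Y and p=p, OF filt S F \<rho>w]
    buyer_risk_translate[where F=F and Y=Y and p=p, OF filt S F \<rho>b]
  by (rule ereal_diff_real_eq_add_real_iff)

theorem lemma4:
  fixes M :: "'a measure" and Fl :: "nat \<Rightarrow> 'a measure" and K :: nat
    and S :: "nat \<Rightarrow> 'a \<Rightarrow> real" and Y :: "nat \<Rightarrow> 'a \<Rightarrow> 'y::topological_space"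
    and F :: "nat \<Rightarrow> real \<Rightarrow> 'y \<Rightarrow> real"
    and \<rho>w \<rho>b :: "('a \<Rightarrow> real) \<Rightarrow> real"
  assumes "prob_space M"
    and "discrete_filtration M Fl K"
    and "\<forall>k\<le>K. S k \<in> borel_measurable (Fl k)"
    and "\<forall>k\<le>K. Y k \<in> Fl k \<rightarrow>\<^sub>M borel"
    and "\<forall>k\<le>K. (\<lambda>\<omega>. F k (S k \<omega>) (Y k \<omega>)) \<in> borel_measurable (Fl k)"
    and "convex_risk_measure M \<rho>w"
    and "convex_risk_measure M \<rho>b"
  shows "((\<exists>!p. equal_risk_price M Fl K S Y F \<rho>w \<rho>b p) \<longleftrightarrow>
            (\<bar>buyer_risk M Fl K S Y F \<rho>b 0\<bar> \<noteq> \<infinity> \<and> \<bar>writer_risk M Fl K S Y F \<rho>w 0\<bar> \<noteq> \<infinity>))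
       \<and> (\<forall>p. equal_risk_price M Fl K S Y F \<rho>w \<rho>b p \<longrightarrow>
            p = (real_of_ereal (writer_risk M Fl K S Y F \<rho>w 0)
                 - real_of_ereal (buyer_risk M Fl K S Y F \<rho>b 0)) / 2)"
proof -
  have "cash_additive M \<rho>w" "cash_additive M \<rho>b"
    using assms(6,7) by (simp_all add: convex_risk_measure_cash_additive)
  note price_iff = equal_risk_price_iff[where F=F and Y=Y, OF assms(2,3,5) this]
  show ?thesis
    unfolding price_iff Ex1_conj_eq_iff by simp
qed

end
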